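(* In any execution of $\mathtt{search}(\mathcal{G},T)$ (defined in the context), let $\mathcal{G}'$ be the current subgame with top priority $p$, $\alpha\equiv p\pmod 2$, and let $(Z,\sigma)=\mathit{TAttr}^{\mathcal{G}',T'}_\alpha(\mathrm{pr}^{-1}(p)\cap V')$ be the computed region and strategy. Then from every vertex $v\in Z$, player $\overline{\alpha}$ can reach a vertex of priority $p$ via a path in $\mathcal{G}'$ that lies entirely in $Z$ and is consistent with $\sigma$.
   Context: Parity games: $\mathcal{G}=(V_0,V_1,E,\mathrm{pr})$, $V=V_0\cup V_1$ finite, partitioned into vertices of Even ($0$) and Odd ($1$); $E\subseteq V\times V$ with every vertex having a successor; $\mathrm{pr}:V\to\{0,\dots,d\}$. $E(u)=\{v:(u,v)\in E\}$, $\mathrm{pr}(U)=\max_{u\in U}\mathrm{pr}(u)$, $\mathrm{pr}^{-1}(p)$ the set of vertices of priority $p$, $\overline{\alpha}=1-\alpha$. A cycle is won by $\alpha$ if its highest priority has parity $\alpha$. A strategy of $\alpha$ is a partial function $\sigma$ on $V_\alpha$ with $\sigma(v)\in E(v)$; a path is consistent with $\sigma$ if every vertex $v\in\mathrm{dom}(\sigma)$ on it (other than the last) is followed by $\sigma(v)$. For $U\subseteq V$, $\mathcal{G}\cap U$ is the subgame with vertices $V\cap U$ and edges $E\cap(U\times U)$, and $\mathcal{G}\setminus U=\mathcal{G}\cap(V\setminus U)$. A $p$-tangle is a nonempty $U\subseteq V$ with $p=\mathrm{pr}(U)$ such that for $\alpha\equiv p\pmod 2$ there is a strategy $\sigma:U\cap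 V_\alpha\to U$ (witness strategy $\sigma_T(U)$) with $(U,E\cap(\sigma\cup((U\cap V_{\overline{\alpha}})\times U)))$ strongly connected and all its cycles won by $\alpha$ ("won by $\alpha$"). For a tangle $t$ won by $\alpha$ in a game with edge set $E$, $E_T(t)=\{v\notin t:\exists u\in t\cap V_{\overline{\alpha}},(u,v)\in E\}$. $T_\alpha$ denotes the tangles of $T$ won by $\alpha$; for a subgame $\mathcal{G}'$, $T\cap\mathcal{G}'$ denotes the tangles of $T$ contained in its vertex set. Tangle attractor: for a game $\mathcal{G}$ with vertices $V$, tangles $T$, player $\alpha$ and $A\subseteq V$, $\mathit{TAttr}^{\mathcal{G},T}_\alpha(A)$ is the least $Z\supseteq A$ containing every $v\in V_\alpha$ with $E(v)\cap Z\neq\emptyset$, every $v\in V_{\overline{\alpha}}$ with $E(v)\subseteq Z$, and every vertex of every $t\in T_\alpha$ with $\emptyset\neq E_T(t)\subseteq Z$ ($E_T$ computed in $\mathcal{G}$). It is computed iteratively together with a strategy $\sigma$ of $\alpha$ (initially empty): when an $\alpha$-vertex is added individually, $\sigma$ maps it to a successor already in $Z$; each $\alpha$-vertex of $A$ gets as $\sigma$-value a successor in $Z$ once one exists; when the vertices of a tangle $t$ are added, $\sigma(u):=\sigma_T(t)(u)$ for every $\alpha$-vertex $u\in t$ not yet in $\mathrm{dom}(\sigma)$. extract-tangles$(Z,\sigma)$, for a subgame $\mathcal{G}'=(V',E')$ with top priority $p$, $\alpha\equiv p$, region $Z\subseteq V'$ and strategy $\sigma$: let $Y$ be the greatest $X\subseteq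 Z$ such that every $v\in X\cap V_{\overline{\alpha}}$ has $E'(v)\subseteq X$ and every $v\in X\cap V_\alpha$ has $\sigma(v)\in X$; let $H$ be the graph on $Y$ with edges $(v,\sigma(v))$ for $v\in Y\cap V_\alpha$ and $(v,w)\in E'$ for $v\in Y\cap V_{\overline{\alpha}}$; return all bottom strongly connected components of $H$ that contain at least one edge of $H$, each with witness strategy $\sigma$ restricted to it. $\mathtt{search}(\mathcal{G},T)$ (with $T$ a set of tangles of $\mathcal{G}$): repeat forever: set $r:=\emptyset$ (a partial function $V\to\mathbb{N}$, the region function) and $Y:=\emptyset$; while $V\setminus\mathrm{dom}(r)\neq\emptyset$: let $\mathcal{G}':=\mathcal{G}\setminus\mathrm{dom}(r)$ with vertex set $V'$, $T':=T\cap\mathcal{G}'$, $p:=\mathrm{pr}(\mathcal{G}')$, $\alpha:=p\bmod 2$; compute $(Z,\sigma):=\mathit{TAttr}^{\mathcal{G}',T'}_\alpha(\mathrm{pr}^{-1}(p)\cap V')$ (the region of priority $p$); let $A:=$ extract-tangles$(Z,\sigma)$; if some $t\in A$ has $E_T(t)=\emptyset$ with $E_T$ computed in the full game $\mathcal{G}$, return $(T\cup Y,t)$; otherwise set $r(v):=p$ for all $v\in Z$ and $Y:=Y\cup A$. After the while-loop, set $T:=T\cup Y$. *)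

theory Defs
  imports Main
begin

record 'v game =
  V0 :: "'v set"
  V1 :: "'v set"
  E  :: "('v \<times> 'v) set"
  pr :: "'v \<Rightarrow> nat"

definition verts :: "('v, 'z) game_scheme \<Rightarrow> 'v set" where
  "verts G = V0 G \<union> V1 G"

text \<open>Vertices owned by player a (0 = Even, 1 = Odd).\<close>
definition owned :: "('v, 'z) game_scheme \<Rightarrow> nat \<Rightarrow> 'v set" where
  "owned G a = (if a = 0 then V0 G else V1 G)"

definition succs :: "('v, 'z) game_scheme \<Rightarrow> 'v \<Rightarrow> 'v set" where
  "succs G u = {v. (u, v) \<in> E G}"

definition prio :: "('v, 'z) game_scheme \<Rightarrow> 'v set \<Rightarrow> nat" where
  "prio G U = Max (pr G ` U)"

definition parity_game :: "'v game \<Rightarrow> bool" where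
  "parity_game G \<longleftrightarrow> finite (verts G) \<and> V0 G \<inter> V1 G = {} \<and>
     E G \<subseteq> verts G \<times> verts G \<and> (\<forall>v \<in> verts G. \<exists>w. (v, w) \<in> E G)"

definition subgame :: "'v game \<Rightarrow> 'v set \<Rightarrow> 'v game" where
  "subgame G U = \<lparr>V0 = V0 G \<inter> U, V1 = V1 G \<inter> U, E = E G \<inter> (U \<times> U), pr = pr G\<rparr>"

text \<open>A tangle is represented together with its witness strategy: a pair (U, sigma).\<close>
type_synonym 'v tangle = "'v set \<times> ('v \<rightharpoonup> 'v)"

definition tangle_winner :: "'v game \<Rightarrow> 'v tangle \<Rightarrow> nat" where
  "tangle_winner G t = prio G (fst t) mod 2"

definition tangle_edges :: "'v game \<Rightarrow> 'v set \<Rightarrow> ('v \<rightharpoonup> 'v) \<Rightarrow> nat \<Rightarrow> ('v \<times> 'v) set" where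
  "tangle_edges G U \<sigma> a = {(u, w). (u, w) \<in> E G \<and>
      ((u \<in> U \<inter> owned G a \<and> \<sigma> u = Some w) \<or> (u \<in> U \<inter> owned G (1 - a) \<and> w \<in> U))}"

definition is_cycle :: "('v \<times> 'v) set \<Rightarrow> 'v list \<Rightarrow> bool" where
  "is_cycle R cs \<longleftrightarrow> cs \<noteq> [] \<and> (\<forall>i < length cs - 1. (cs ! i, cs ! Suc i) \<in> R) \<and>
     (last cs, hd cs) \<in> R"

definition is_tangle :: "'v game \<Rightarrow> 'v tangle \<Rightarrow> bool" where
  "is_tangle G t \<longleftrightarrow> (let U = fst t; \<sigma> = snd t; a = prio G U mod 2 in
     U \<noteq> {} \<and> U \<subseteq> verts G \<and>
     dom \<sigma> = U \<inter> owned G a \<and>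
     (\<forall>u w. \<sigma> u = Some w \<longrightarrow> w \<in> U \<and> (u, w) \<in> E G) \<and>
     (\<forall>u \<in> U. \<forall>w \<in> U. (u, w) \<in> (tangle_edges G U \<sigma> a)\<^sup>*) \<and>
     (\<forall>cs. is_cycle (tangle_edges G U \<sigma> a) cs \<longrightarrow> prio G (set cs) mod 2 = a))"

definition escapes :: "'v game \<Rightarrow> 'v tangle \<Rightarrow> 'v set" where
  "escapes G t = {v. v \<notin> fst t \<and>
     (\<exists>u \<in> fst t \<inter> owned G (1 - tangle_winner G t). (u, v) \<in> E G)}"

definition upd_A :: "'v game \<Rightarrow> nat \<Rightarrow> 'v set \<Rightarrow> 'v set \<Rightarrow> ('v \<rightharpoonup> 'v) \<Rightarrow> ('v \<rightharpoonup> 'v) \<Rightarrow> bool" where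
  "upd_A G a A Z \<sigma> \<sigma>' \<longleftrightarrow> (\<forall>v.
     if v \<in> A \<inter> owned G a \<and> \<sigma> v = None \<and> succs G v \<inter> Z \<noteq> {}
     then (\<exists>w \<in> succs G v \<inter> Z. \<sigma>' v = Some w)
     else \<sigma>' v = \<sigma> v)"

definition tattr_step :: "'v game \<Rightarrow> 'v tangle set \<Rightarrow> nat \<Rightarrow> 'v set \<Rightarrow>
    ('v set \<times> ('v \<rightharpoonup> 'v)) \<Rightarrow> ('v set \<times> ('v \<rightharpoonup> 'v)) \<Rightarrow> bool" where
  "tattr_step G T a A s s' \<longleftrightarrow> (let Z = fst s; \<sigma> = snd s; Z' = fst s'; \<sigma>' = snd s' in
     (\<exists>v w. v \<in> verts G - Z \<and> v \<in> owned G a \<and> w \<in> succs G v \<inter> Z \<and>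
        Z' = insert v Z \<and> upd_A G a A Z' (\<sigma>(v \<mapsto> w)) \<sigma>') \<or>
     (\<exists>v. v \<in> verts G - Z \<and> v \<in> owned G (1 - a) \<and> succs G v \<subseteq> Z \<and>
        Z' = insert v Z \<and> upd_A G a A Z' \<sigma> \<sigma>') \<or>
     (\<exists>t \<in> T. tangle_winner G t = a \<and> \<not> fst t \<subseteq> Z \<and>
        escapes G t \<noteq> {} \<and> escapes G t \<subseteq> Z \<and> Z' = Z \<union> fst t \<and>
        upd_A G a A Z'
          (\<lambda>u. if u \<in> fst t \<inter> owned G a \<and> \<sigma> u = None then snd t u else \<sigma> u) \<sigma>'))"

text \<open>(Z, sigma) is a possible result of computing TAttr^{G,T}_a(A).\<close>
definition tattr_result :: "'v game \<Rightarrow> 'v tangle set \<Rightarrow> nat \<Rightarrow> 'v set \<Rightarrow>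
    'v set \<Rightarrow> ('v \<rightharpoonup> 'v) \<Rightarrow> bool" where
  "tattr_result G T a A Z \<sigma> \<longleftrightarrow> (\<exists>\<sigma>0. upd_A G a A A Map.empty \<sigma>0 \<and>
     (tattr_step G T a A)\<^sup>*\<^sup>* (A, \<sigma>0) (Z, \<sigma>) \<and>
     \<not> (\<exists>s'. tattr_step G T a A (Z, \<sigma>) s'))"

definition closed_region :: "'v game \<Rightarrow> nat \<Rightarrow> 'v set \<Rightarrow> ('v \<rightharpoonup> 'v) \<Rightarrow> 'v set" where
  "closed_region G a Z \<sigma> = gfp (\<lambda>X. {v \<in> Z.
      (v \<in> owned G (1 - a) \<longrightarrow> succs G v \<subseteq> X) \<and>
      (v \<in> owned G a \<longrightarrow> (\<exists>w. \<sigma> v = Some w \<and> w \<in> X))})"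

definition region_graph :: "'v game \<Rightarrow> nat \<Rightarrow> 'v set \<Rightarrow> ('v \<rightharpoonup> 'v) \<Rightarrow> ('v \<times> 'v) set" where
  "region_graph G a Z \<sigma> = {(v, w). v \<in> closed_region G a Z \<sigma> \<and>
      ((v \<in> owned G a \<and> \<sigma> v = Some w) \<or> (v \<in> owned G (1 - a) \<and> (v, w) \<in> E G))}"

definition bottom_scc :: "'v set \<Rightarrow> ('v \<times> 'v) set \<Rightarrow> 'v set \<Rightarrow> bool" where
  "bottom_scc Vs H C \<longleftrightarrow> C \<noteq> {} \<and> C \<subseteq> Vs \<and>
     (\<forall>u \<in> C. \<forall>w \<in> C. (u, w) \<in> H\<^sup>*) \<and>
     (\<forall>u \<in> C. \<forall>w \<in> Vs. (u, w) \<in> H\<^sup>* \<and> (w, u) \<in> H\<^sup>* \<longrightarrow> w \<in> C) \<and>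
     (\<forall>u \<in> C. \<forall>w. (u, w) \<in> H \<longrightarrow> w \<in> C)"

definition extract_tangles :: "'v game \<Rightarrow> nat \<Rightarrow> 'v set \<Rightarrow> ('v \<rightharpoonup> 'v) \<Rightarrow> 'v tangle set" where
  "extract_tangles G a Z \<sigma> = {(C, \<sigma> |` C) | C.
      bottom_scc (closed_region G a Z \<sigma>) (region_graph G a Z \<sigma>) C \<and>
      (\<exists>u \<in> C. \<exists>w \<in> C. (u, w) \<in> region_graph G a Z \<sigma>)}"

text \<open>Search states (T, r, Y). A step is one iteration of the inner while loop that does
  not return, or the end of the while loop (T := T \<union> Y, restart with r, Y empty).\<close>
type_synonym 'v sstate = "'v tangle set \<times> ('v \<rightharpoonup> nat) \<times> 'v tangle set"

definition search_step :: "'v game \<Rightarrow> 'v sstate \<Rightarrow> 'v sstate \<Rightarrow> bool" where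
  "search_step G s s' \<longleftrightarrow> (case s of (T, r, Y) \<Rightarrow>
     (verts G - dom r \<noteq> {} \<and>
       (let G' = subgame G (verts G - dom r);
            T' = {t \<in> T. fst t \<subseteq> verts G'};
            p = prio G (verts G');
            a = p mod 2
        in \<exists>Z \<sigma>. tattr_result G' T' a ({v. pr G v = p} \<inter> verts G') Z \<sigma> \<and>
             \<not> (\<exists>t \<in> extract_tangles G' a Z \<sigma>. escapes G t = {}) \<and>
             s' = (T, (\<lambda>v. if v \<in> Z then Some p else r v), Y \<union> extract_tangles G' a Z \<sigma>)))
     \<or> (verts G - dom r = {} \<and> s' = (T \<union> Y, Map.empty, {})))"

end

theory Submission
  imports Defs
begin

(* Every vertex enters Z with a sigma-consistent move towards the target, so by induction along
   the construction every vertex of Z is attracted: an alpha-vertex follows its strategy value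
   into Z, an opponent vertex moves to any successor (all of them lie in Z), and a vertex of an
   attracted tangle follows moves of the witness strategy, which keep the tangle strongly
   connected, to an opponent vertex with an escape into Z.  Two invariants of search make this
   work: the unassigned part of the game has no dead ends (the complement of a maximal attractor
   never has one), and every collected tangle is strongly connected under its witness strategy.
   An extracted tangle is moreover won by alpha, because each bottom SCC of the closed part of Z
   contains a vertex of top priority. *)

lemma owned_subgame [simp]: "owned (subgame G U) a = owned G a \<inter> U"
  by (simp add: owned_def subgame_def)

lemma verts_subgame [simp]: "verts (subgame G U) = verts G \<inter> U"
  by (auto simp: verts_def subgame_def)

lemma E_subgame [simp]: "E (subgame G U) = E G \<inter> (U \<times> U)"
  by (simp add: subgame_def)

lemma prio_subgame [simp]: "prio (subgame G U) X = prio G X"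
  by (simp add: prio_def subgame_def)

lemma succs_subgame [simp]: "succs (subgame G U) v = {w. (v, w) \<in> E G \<and> v \<in> U \<and> w \<in> U}"
  by (auto simp: succs_def)

lemma tangle_winner_subgame [simp]: "tangle_winner (subgame G U) t = prio G (fst t) mod 2"
  by (simp add: tangle_winner_def)

lemma owned_disjoint: "V0 G \<inter> V1 G = {} \<Longrightarrow> x \<in> owned G a \<Longrightarrow> x \<notin> owned G (1 - a)"
  by (auto simp: owned_def)

lemma owned_cases: "x \<in> verts G \<Longrightarrow> x \<in> owned G a \<or> x \<in> owned G (1 - a)"
  by (auto simp: owned_def verts_def)

section \<open>Paths consistent with a strategy\<close>

definition strategy_move :: "'v game \<Rightarrow> ('v \<rightharpoonup> 'v) \<Rightarrow> 'v \<Rightarrow> 'v \<Rightarrow> bool" where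
  "strategy_move G \<sigma> x y \<longleftrightarrow> (x, y) \<in> E G \<and> (\<forall>w. \<sigma> x = Some w \<longrightarrow> y = w)"

lemma strategy_move_subgame [simp]:
  "strategy_move (subgame G U) \<sigma> x y \<longleftrightarrow> strategy_move G \<sigma> x y \<and> x \<in> U \<and> y \<in> U"
  by (auto simp: strategy_move_def)

inductive attracted :: "'v game \<Rightarrow> 'v set \<Rightarrow> 'v set \<Rightarrow> ('v \<rightharpoonup> 'v) \<Rightarrow> 'v \<Rightarrow> bool"
  for G A Z \<sigma> where
  target: "v \<in> A \<Longrightarrow> v \<in> Z \<Longrightarrow> attracted G A Z \<sigma> v"
| move: "v \<in> Z \<Longrightarrow> v \<notin> A \<Longrightarrow> strategy_move G \<sigma> v w \<Longrightarrow> attracted G A Z \<sigma> w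
    \<Longrightarrow> attracted G A Z \<sigma> v"

lemma attracted_in_region: "attracted G A Z \<sigma> v \<Longrightarrow> v \<in> Z"
  by (induction rule: attracted.induct) auto

lemma attracted_mono:
  assumes "attracted G A Z \<sigma> v" and "Z \<subseteq> Z'" and "\<forall>x\<in>Z - A. \<sigma>' x = \<sigma> x"
  shows "attracted G A Z' \<sigma>' v"
  using assms
proof (induction rule: attracted.induct)
  case (target v)
  then show ?case by (auto intro: attracted.target)
next
  case (move v w)
  then have "strategy_move G \<sigma>' v w" by (simp add: strategy_move_def)
  with move show ?case by (auto intro: attracted.move)
qed

lemma attracted_path:
  assumes "attracted G A Z \<sigma> v"
  shows "\<exists>path. path \<noteq> [] \<and> hd path = v \<and> last path \<in> A \<and> set path \<subseteq> Z \<and>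
           successively (strategy_move G \<sigma>) path"
  using assms
proof (induction rule: attracted.induct)
  case (target v)
  show ?case by (rule exI[of _ "[v]"]) (use target in simp)
next
  case (move v w)
  then obtain path where "path \<noteq> []" "hd path = w" "last path \<in> A" "set path \<subseteq> Z"
    "successively (strategy_move G \<sigma>) path" by blast
  with move show ?case by (intro exI[of _ "v # path"]) (simp add: successively_Cons)
qed

lemma upd_A_outside: "upd_A G a A Z \<tau> \<sigma>' \<Longrightarrow> v \<notin> A \<Longrightarrow> \<sigma>' v = \<tau> v"
  unfolding upd_A_def by (erule allE[of _ v]) (auto split: if_splits)

lemma upd_A_SomeD:
  "upd_A G a A Z \<tau> \<sigma>' \<Longrightarrow> \<sigma>' v = Some w \<Longrightarrow>
     \<tau> v = Some w \<or> v \<in> A \<inter> owned G a \<and> w \<in> succs G v \<inter> Z"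
  unfolding upd_A_def by (erule allE[of _ v]) (auto split: if_splits)

lemma upd_A_exists: "\<exists>\<sigma>'. upd_A G a A Z \<tau> \<sigma>'"
proof -
  define pick where "pick v = (SOME w. w \<in> succs G v \<inter> Z)" for v
  have "pick v \<in> succs G v \<inter> Z" if "succs G v \<inter> Z \<noteq> {}" for v
    unfolding pick_def using that some_in_eq by metis
  then have "upd_A G a A Z \<tau> (\<lambda>v. if v \<in> A \<inter> owned G a \<and> \<tau> v = None \<and>
      succs G v \<inter> Z \<noteq> {} then Some (pick v) else \<tau> v)"
    unfolding upd_A_def by auto
  then show ?thesis by blast
qed

definition attractor_inv ::
    "'v game \<Rightarrow> 'v set \<Rightarrow> 'v set \<Rightarrow> nat \<Rightarrow> 'v set \<Rightarrow> ('v \<rightharpoonup> 'v) \<Rightarrow> bool" where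
  "attractor_inv G U A a Z \<sigma> \<longleftrightarrow> A \<subseteq> Z \<and> Z \<subseteq> U \<and> dom \<sigma> \<subseteq> Z \<inter> owned G a \<and>
     (\<forall>x y. \<sigma> x = Some y \<longrightarrow> y \<in> Z \<and> (x, y) \<in> E G) \<and>
     (Z - A) \<inter> owned G a \<subseteq> dom \<sigma> \<and> (\<forall>v\<in>Z. attracted G A Z \<sigma> v)"

lemma attractor_inv_init:
  assumes "A \<subseteq> U" and "upd_A (subgame G U) a A A Map.empty \<sigma>"
  shows "attractor_inv G U A a A \<sigma>"
proof -
  have "x \<in> A \<inter> owned G a \<and> y \<in> A \<and> (x, y) \<in> E G" if "\<sigma> x = Some y" for x y
    using upd_A_SomeD[OF assms(2) that] by auto
  with assms(1) show ?thesis
    unfolding attractor_inv_def by (auto intro: attracted.target)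
qed

lemma attractor_inv_extend:
  assumes inv: "attractor_inv G U A a Z \<sigma>" and "Z \<subseteq> Z'" "Z' \<subseteq> U"
    and upd: "upd_A (subgame G U) a A Z' \<tau> \<sigma>'"
    and agree: "\<forall>x\<in>Z - A. \<tau> x = \<sigma> x"
    and \<tau>_moves: "\<forall>x y. \<tau> x = Some y \<longrightarrow> y \<in> Z' \<and> (x, y) \<in> E G"
    and \<tau>_dom: "dom \<tau> \<subseteq> Z' \<inter> owned G a"
    and \<tau>_total: "(Z' - Z) \<inter> owned G a \<subseteq> dom \<tau>"
    and new: "\<forall>y\<in>Z. attracted G A Z' \<sigma>' y \<Longrightarrow> \<forall>x\<in>Z' - Z. attracted G A Z' \<sigma>' x"
  shows "attractor_inv G U A a Z' \<sigma>'"
proof -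
  from inv have AZ: "A \<subseteq> Z" and "dom \<sigma> \<subseteq> Z \<inter> owned G a"
    and total: "(Z - A) \<inter> owned G a \<subseteq> dom \<sigma>" and attr: "\<forall>v\<in>Z. attracted G A Z \<sigma> v"
    unfolding attractor_inv_def by auto
  have outside: "\<sigma>' x = \<tau> x" if "x \<notin> A" for x
    using upd_A_outside[OF upd that] .
  have stable: "\<forall>x\<in>Z - A. \<sigma>' x = \<sigma> x"
    using agree outside by auto
  have old: "\<forall>y\<in>Z. attracted G A Z' \<sigma>' y"
    using attr attracted_mono[OF _ \<open>Z \<subseteq> Z'\<close> stable] by blast
  have moves: "y \<in> Z' \<and> (x, y) \<in> E G \<and> x \<in> Z' \<inter> owned G a" if "\<sigma>' x = Some y" for x y
    using upd_A_SomeD[OF upd that] \<tau>_moves \<tau>_dom AZ \<open>Z \<subseteq> Z'\<close> by (auto simp: succs_def)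
  have "(Z' - A) \<inter> owned G a \<subseteq> dom \<sigma>'"
  proof
    fix x assume x: "x \<in> (Z' - A) \<inter> owned G a"
    then have "\<sigma>' x = \<tau> x" using outside by blast
    moreover have "x \<in> dom \<tau>"
      using x total \<tau>_total agree by (cases "x \<in> Z") (auto simp: dom_def)
    ultimately show "x \<in> dom \<sigma>'" by (simp add: dom_def)
  qed
  with moves old new AZ \<open>Z \<subseteq> Z'\<close> \<open>Z' \<subseteq> U\<close> show ?thesis
    unfolding attractor_inv_def by (auto simp: dom_def)
qed

lemma attractor_inv_add_own_vertex:
  assumes inv: "attractor_inv G U A a Z \<sigma>"
    and v: "v \<in> U - Z" "v \<in> owned G a" and w: "w \<in> Z" "(v, w) \<in> E G"
    and upd: "upd_A (subgame G U) a A (insert v Z) (\<sigma>(v \<mapsto> w)) \<sigma>'"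
  shows "attractor_inv G U A a (insert v Z) \<sigma>'"
proof (rule attractor_inv_extend[OF inv _ _ upd])
  from inv have AZ: "A \<subseteq> Z" and ZU: "Z \<subseteq> U" unfolding attractor_inv_def by auto
  with v show "insert v Z \<subseteq> U" by blast
  have "v \<notin> A" using v AZ by blast
  then have "\<sigma>' v = Some w" by (simp add: upd_A_outside[OF upd])
  then have "strategy_move G \<sigma>' v w" using w by (simp add: strategy_move_def)
  with v AZ show "\<forall>x\<in>insert v Z - Z. attracted G A (insert v Z) \<sigma>' x"
    if "\<forall>y\<in>Z. attracted G A (insert v Z) \<sigma>' y"
    using that w by (auto intro: attracted.move)
qed (use inv v w in \<open>auto simp: attractor_inv_def\<close>)

lemma attractor_inv_add_opponent_vertex:
  assumes disj: "V0 G \<inter> V1 G = {}" and inv: "attractor_inv G U A a Z \<sigma>"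
    and v: "v \<in> U - Z" "v \<in> owned G (1 - a)" and w: "w \<in> Z" "(v, w) \<in> E G"
    and upd: "upd_A (subgame G U) a A (insert v Z) \<sigma> \<sigma>'"
  shows "attractor_inv G U A a (insert v Z) \<sigma>'"
proof (rule attractor_inv_extend[OF inv _ _ upd])
  from inv have AZ: "A \<subseteq> Z" and ZU: "Z \<subseteq> U" and "dom \<sigma> \<subseteq> Z \<inter> owned G a"
    unfolding attractor_inv_def by auto
  with v show "insert v Z \<subseteq> U" by blast
  have "v \<notin> A" "v \<notin> dom \<sigma>" using v AZ \<open>dom \<sigma> \<subseteq> Z \<inter> owned G a\<close> by auto
  then have "\<sigma>' v = None" by (simp add: upd_A_outside[OF upd] domIff)
  then have "strategy_move G \<sigma>' v w" using w by (simp add: strategy_move_def)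
  with v AZ show "\<forall>x\<in>insert v Z - Z. attracted G A (insert v Z) \<sigma>' x"
    if "\<forall>y\<in>Z. attracted G A (insert v Z) \<sigma>' y"
    using that w by (auto intro: attracted.move)
  show "(insert v Z - Z) \<inter> owned G a \<subseteq> dom \<sigma>"
    using owned_disjoint[OF disj, of v a] v by blast
qed (use inv in \<open>auto simp: attractor_inv_def\<close>)

section \<open>Attraction through tangles\<close>

definition tangle_moves :: "'v game \<Rightarrow> 'v tangle \<Rightarrow> ('v \<times> 'v) set" where
  "tangle_moves G t = {(x, y). x \<in> fst t \<and> y \<in> fst t \<and> strategy_move G (snd t) x y}"

text \<open>\<^const>\<open>is_tangle\<close> without the condition on cycles, which is not established for the
  tangles extracted by search and not needed for attraction.\<close>

definition weak_tangle :: "'v game \<Rightarrow> 'v tangle \<Rightarrow> bool" where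
  "weak_tangle G t \<longleftrightarrow> dom (snd t) = fst t \<inter> owned G (prio G (fst t) mod 2) \<and>
     (\<forall>x y. snd t x = Some y \<longrightarrow> y \<in> fst t \<and> (x, y) \<in> E G) \<and>
     (\<forall>u\<in>fst t. \<forall>w\<in>fst t. (u, w) \<in> (tangle_moves G t)\<^sup>*)"

lemma is_tangle_weak_tangle:
  assumes disj: "V0 G \<inter> V1 G = {}" and t: "is_tangle G t"
  shows "weak_tangle G t"
proof -
  obtain U \<sigma> where t_eq: "t = (U, \<sigma>)" by (cases t)
  define a where "a = prio G U mod 2"
  from t have moves: "\<forall>u w. \<sigma> u = Some w \<longrightarrow> w \<in> U \<and> (u, w) \<in> E G"
    and dom: "dom \<sigma> = U \<inter> owned G a"
    and connected: "\<forall>u\<in>U. \<forall>w\<in>U. (u, w) \<in> (tangle_edges G U \<sigma> a)\<^sup>*"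
    unfolding is_tangle_def t_eq Let_def a_def by auto
  have "tangle_edges G U \<sigma> a \<subseteq> tangle_moves G t"
  proof
    fix e assume "e \<in> tangle_edges G U \<sigma> a"
    then obtain u w where e: "e = (u, w)" "(u, w) \<in> E G"
      and "u \<in> U \<inter> owned G a \<and> \<sigma> u = Some w \<or> u \<in> U \<inter> owned G (1 - a) \<and> w \<in> U"
      unfolding tangle_edges_def by auto
    moreover have "\<sigma> u = None" if "u \<in> owned G (1 - a)"
      using dom owned_disjoint[OF disj, of u a] that by auto
    ultimately show "e \<in> tangle_moves G t"
      using moves unfolding tangle_moves_def strategy_move_def t_eq by auto
  qed
  then have "\<forall>u\<in>U. \<forall>w\<in>U. (u, w) \<in> (tangle_moves G t)\<^sup>*"
    using connected rtrancl_mono by blast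
  with moves dom show ?thesis
    unfolding weak_tangle_def t_eq a_def by simp
qed

lemma attracted_along_tangle_moves:
  assumes old: "\<forall>y\<in>Z. attracted G A Z' \<sigma>' y" and "A \<subseteq> Z" "Z \<subseteq> Z'" "fst t \<subseteq> Z'"
    and follows: "\<forall>y\<in>fst t - Z. \<sigma>' y = snd t y"
    and x: "x \<in> fst t" "x \<notin> dom (snd t)" and e: "(x, e) \<in> E G" "e \<in> Z"
    and path: "(u, x) \<in> (tangle_moves G t)\<^sup>*"
  shows "attracted G A Z' \<sigma>' u"
  using path
proof (induction rule: converse_rtrancl_induct)
  case base
  show ?case
  proof (cases "x \<in> Z")
    case False
    then have "strategy_move G \<sigma>' x e"
      using follows x e by (auto simp: strategy_move_def domIff)
    with False x e old assms(2,4) show ?thesis by (auto intro: attracted.move)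
  qed (use old in blast)
next
  case (step y z)
  then have "y \<in> fst t" and "strategy_move G (snd t) y z"
    by (auto simp: tangle_moves_def)
  show ?case
  proof (cases "y \<in> Z")
    case False
    with \<open>strategy_move G (snd t) y z\<close> \<open>y \<in> fst t\<close> follows
    have "strategy_move G \<sigma>' y z" by (simp add: strategy_move_def)
    with False \<open>y \<in> fst t\<close> step.IH assms(2,4) show ?thesis by (auto intro: attracted.move)
  qed (use old in blast)
qed

lemma attractor_inv_add_tangle:
  assumes disj: "V0 G \<inter> V1 G = {}" and inv: "attractor_inv G U A a Z \<sigma>"
    and t: "weak_tangle G t" "fst t \<subseteq> U" "prio G (fst t) mod 2 = a"
    and esc: "escapes (subgame G U) t \<noteq> {}" "escapes (subgame G U) t \<subseteq> Z"
    and upd: "upd_A (subgame G U) a A (Z \<union> fst t)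
      (\<lambda>u. if u \<in> fst t \<inter> owned (subgame G U) a \<and> \<sigma> u = None then snd t u else \<sigma> u) \<sigma>'"
  shows "attractor_inv G U A a (Z \<union> fst t) \<sigma>'"
proof -
  define \<tau> where "\<tau> u = (if u \<in> fst t \<inter> owned (subgame G U) a \<and> \<sigma> u = None
    then snd t u else \<sigma> u)" for u
  from inv have AZ: "A \<subseteq> Z" and ZU: "Z \<subseteq> U" and dom: "dom \<sigma> \<subseteq> Z \<inter> owned G a"
    and moves: "\<forall>x y. \<sigma> x = Some y \<longrightarrow> y \<in> Z \<and> (x, y) \<in> E G"
    and total: "(Z - A) \<inter> owned G a \<subseteq> dom \<sigma>"
    unfolding attractor_inv_def by auto
  from t have t_dom: "dom (snd t) = fst t \<inter> owned G a"
    and t_moves: "\<forall>x y. snd t x = Some y \<longrightarrow> y \<in> fst t \<and> (x, y) \<in> E G"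
    and connected: "\<forall>u\<in>fst t. \<forall>w\<in>fst t. (u, w) \<in> (tangle_moves G t)\<^sup>*"
    unfolding weak_tangle_def by auto
  have \<tau>_new: "\<tau> y = snd t y" if "y \<in> fst t - Z" for y
  proof -
    have "y \<notin> dom \<sigma>" and "y \<in> U" using that dom t(2) by auto
    then show ?thesis using t_dom unfolding \<tau>_def by (auto simp: domIff)
  qed
  obtain x e where x: "x \<in> fst t" "x \<in> owned G (1 - a)" and e: "(x, e) \<in> E G" "e \<in> Z"
    using esc t(3) unfolding escapes_def by auto
  have "x \<notin> dom (snd t)" using t_dom x owned_disjoint[OF disj, of x a] by auto
  show ?thesis
  proof (rule attractor_inv_extend[OF inv _ _ upd[folded \<tau>_def]])
    show "\<forall>x\<in>Z - A. \<tau> x = \<sigma> x" using total unfolding \<tau>_def by auto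
    show "\<forall>x y. \<tau> x = Some y \<longrightarrow> y \<in> Z \<union> fst t \<and> (x, y) \<in> E G"
      using moves t_moves unfolding \<tau>_def by auto
    show "dom \<tau> \<subseteq> (Z \<union> fst t) \<inter> owned G a"
      using dom t_dom unfolding \<tau>_def by (auto simp: dom_def split: if_splits)
    show "(Z \<union> fst t - Z) \<inter> owned G a \<subseteq> dom \<tau>"
    proof
      fix y assume "y \<in> (Z \<union> fst t - Z) \<inter> owned G a"
      then have "\<tau> y = snd t y" and "y \<in> dom (snd t)" using \<tau>_new t_dom by auto
      then show "y \<in> dom \<tau>" by (simp add: domIff)
    qed
    show "\<forall>u\<in>Z \<union> fst t - Z. attracted G A (Z \<union> fst t) \<sigma>' u"
      if "\<forall>y\<in>Z. attracted G A (Z \<union> fst t) \<sigma>' y"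
    proof
      fix u assume "u \<in> Z \<union> fst t - Z"
      with x connected have "(u, x) \<in> (tangle_moves G t)\<^sup>*" by auto
      moreover have "\<forall>y\<in>fst t - Z. \<sigma>' y = snd t y"
        using \<tau>_new upd_A_outside[OF upd[folded \<tau>_def]] AZ by (metis DiffD2 subsetD)
      ultimately show "attracted G A (Z \<union> fst t) \<sigma>' u"
        using attracted_along_tangle_moves[OF that AZ _ _ _ x(1) \<open>x \<notin> dom (snd t)\<close> e]
        by blast
    qed
  qed (use ZU t(2) in auto)
qed

definition no_dead_ends :: "'v game \<Rightarrow> 'v set \<Rightarrow> bool" where
  "no_dead_ends G U \<longleftrightarrow> (\<forall>v\<in>U. \<exists>w\<in>U. (v, w) \<in> E G)"

lemma attractor_inv_step:
  assumes disj: "V0 G \<inter> V1 G = {}" and "no_dead_ends G U"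
    and tangles: "\<forall>t\<in>T. weak_tangle G t \<and> fst t \<subseteq> U"
    and step: "tattr_step (subgame G U) T a A (Z, \<sigma>) (Z', \<sigma>')"
    and inv: "attractor_inv G U A a Z \<sigma>"
  shows "attractor_inv G U A a Z' \<sigma>'"
  using step unfolding tattr_step_def Let_def prod.sel
proof (elim disjE exE bexE conjE)
  fix v w
  assume "v \<in> verts (subgame G U) - Z" "v \<in> owned (subgame G U) a"
    "w \<in> succs (subgame G U) v \<inter> Z" "Z' = insert v Z"
    "upd_A (subgame G U) a A Z' (\<sigma>(v \<mapsto> w)) \<sigma>'"
  then show ?thesis using attractor_inv_add_own_vertex[OF inv] by auto
next
  fix v
  assume v: "v \<in> verts (subgame G U) - Z" "v \<in> owned (subgame G U) (1 - a)"
    and succs_Z: "succs (subgame G U) v \<subseteq> Z"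
    and "Z' = insert v Z" "upd_A (subgame G U) a A Z' \<sigma> \<sigma>'"
  obtain w where "w \<in> U" "(v, w) \<in> E G"
    using \<open>no_dead_ends G U\<close> v unfolding no_dead_ends_def by auto
  with v succs_Z have "w \<in> Z" by auto
  with v \<open>(v, w) \<in> E G\<close> \<open>Z' = insert v Z\<close> \<open>upd_A (subgame G U) a A Z' \<sigma> \<sigma>'\<close>
  show ?thesis using attractor_inv_add_opponent_vertex[OF disj inv] by auto
next
  fix t
  assume "t \<in> T" "tangle_winner (subgame G U) t = a"
    "escapes (subgame G U) t \<noteq> {}" "escapes (subgame G U) t \<subseteq> Z" "Z' = Z \<union> fst t"
    "upd_A (subgame G U) a A Z'
       (\<lambda>u. if u \<in> fst t \<inter> owned (subgame G U) a \<and> \<sigma> u = None then snd t u else \<sigma> u) \<sigma>'"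
  with tangles show ?thesis using attractor_inv_add_tangle[OF disj inv] by auto
qed

lemma attractor_inv_result:
  assumes "V0 G \<inter> V1 G = {}" and "no_dead_ends G U"
    and "\<forall>t\<in>T. weak_tangle G t \<and> fst t \<subseteq> U" and "A \<subseteq> U"
    and "tattr_result (subgame G U) T a A Z \<sigma>"
  shows "attractor_inv G U A a Z \<sigma>"
proof -
  from assms(5) obtain \<sigma>0 where init: "upd_A (subgame G U) a A A Map.empty \<sigma>0"
    and steps: "(tattr_step (subgame G U) T a A)\<^sup>*\<^sup>* (A, \<sigma>0) (Z, \<sigma>)"
    unfolding tattr_result_def by blast
  from steps attractor_inv_init[OF assms(4) init] show ?thesis
  proof (induction rule: rtranclp_induct2)
    case (step Z \<sigma> Z' \<sigma>')
    then show ?case using attractor_inv_step[OF assms(1-3)] by blast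
  qed
qed

section \<open>Extracted tangles\<close>

lemma closed_region_memD:
  assumes "x \<in> closed_region G a Z \<sigma>"
  shows "x \<in> Z \<and> (x \<in> owned G a \<longrightarrow> x \<in> dom \<sigma>)"
proof -
  let ?F = "\<lambda>X. {v \<in> Z. (v \<in> owned G (1 - a) \<longrightarrow> succs G v \<subseteq> X) \<and>
      (v \<in> owned G a \<longrightarrow> (\<exists>w. \<sigma> v = Some w \<and> w \<in> X))}"
  have "mono ?F" by (rule monoI) blast
  then have "closed_region G a Z \<sigma> = ?F (closed_region G a Z \<sigma>)"
    unfolding closed_region_def by (rule gfp_unfold)
  with assms show ?thesis by auto
qed

lemma region_graph_if_strategy_move:
  assumes "x \<in> closed_region (subgame G U) a Z \<sigma>" and "Z \<subseteq> U" "x \<in> verts G"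
    and "strategy_move G \<sigma> x y" "y \<in> U"
  shows "(x, y) \<in> region_graph (subgame G U) a Z \<sigma>"
proof -
  from assms(1,2) closed_region_memD[OF assms(1)]
  have "x \<in> U" and "x \<in> owned G a \<longrightarrow> x \<in> dom \<sigma>" by auto
  with assms(4) have "x \<in> owned G a \<longrightarrow> \<sigma> x = Some y"
    by (auto simp: strategy_move_def)
  with owned_cases[OF assms(3), of a] assms \<open>x \<in> U\<close> show ?thesis
    unfolding region_graph_def strategy_move_def by auto
qed

lemma strategy_move_if_region_graph:
  assumes disj: "V0 G \<inter> V1 G = {}" and "dom \<sigma> \<subseteq> owned G a"
    and "\<forall>x y. \<sigma> x = Some y \<longrightarrow> (x, y) \<in> E G"
    and "(x, y) \<in> region_graph (subgame G U) a Z \<sigma>"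
  shows "strategy_move G \<sigma> x y"
proof -
  have "\<sigma> x = None" if "x \<in> owned G (1 - a)"
    using assms(2) owned_disjoint[OF disj, of x a] that by auto
  with assms(3,4) show ?thesis
    unfolding region_graph_def strategy_move_def by auto
qed

lemma bottom_scc_meets_target:
  assumes inv: "attractor_inv G U A a Z \<sigma>" and UV: "U \<subseteq> verts G"
    and C: "bottom_scc (closed_region (subgame G U) a Z \<sigma>) (region_graph (subgame G U) a Z \<sigma>) C"
  shows "C \<inter> A \<noteq> {}"
proof -
  from inv have ZU: "Z \<subseteq> U" and attr: "\<forall>v\<in>Z. attracted G A Z \<sigma> v"
    unfolding attractor_inv_def by auto
  from C have "C \<noteq> {}" and C_region: "C \<subseteq> closed_region (subgame G U) a Z \<sigma>"
    and C_closed: "\<And>u w. u \<in> C \<Longrightarrow> (u, w) \<in> region_graph (subgame G U) a Z \<sigma> \<Longrightarrow> w \<in> C"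
    unfolding bottom_scc_def by blast+
  have C_Z: "C \<subseteq> Z" using C_region by (auto dest: closed_region_memD)
  have "C \<inter> A \<noteq> {}" if "attracted G A Z \<sigma> v" "v \<in> C" for v
    using that
  proof (induction rule: attracted.induct)
    case (target v)
    then show ?case by blast
  next
    case (move v w)
    have "w \<in> U" using attracted_in_region[OF move.hyps(4)] ZU by blast
    moreover have "v \<in> verts G" using move.prems C_Z ZU UV by blast
    moreover have "v \<in> closed_region (subgame G U) a Z \<sigma>" using move.prems C_region by blast
    ultimately have "(v, w) \<in> region_graph (subgame G U) a Z \<sigma>"
      using region_graph_if_strategy_move[OF _ ZU _ move.hyps(3)] by blast
    then have "w \<in> C" using C_closed[OF move.prems] by blast
    then show ?case by (rule move.IH)
  qed
  moreover obtain u where "u \<in> C" using \<open>C \<noteq> {}\<close> by blast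
  ultimately show ?thesis using attr C_Z by blast
qed

lemma prio_eq_if_top_vertex:
  assumes "finite U" "C \<subseteq> U" "x \<in> C" "pr G x = prio G U"
  shows "prio G C = prio G U"
proof (rule antisym)
  have "finite C" using assms(1,2) by (rule finite_subset[rotated])
  show "prio G C \<le> prio G U"
    unfolding prio_def using assms(1-3) by (auto intro: Max_mono)
  have "pr G x \<le> prio G C"
    unfolding prio_def using \<open>finite C\<close> assms(3) by simp
  then show "prio G U \<le> prio G C" using assms(4) by simp
qed

lemma rtrancl_within_closed_set:
  assumes "\<And>x y. x \<in> C \<Longrightarrow> (x, y) \<in> H \<Longrightarrow> (x, y) \<in> R \<and> y \<in> C"
    and "(u, w) \<in> H\<^sup>*" and "u \<in> C"
  shows "(u, w) \<in> R\<^sup>* \<and> w \<in> C"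
  using assms(2,3)
proof (induction rule: rtrancl_induct)
  case (step y z)
  with assms(1)[of y z] show ?case by (meson rtrancl.rtrancl_into_rtrancl)
qed simp

lemma extracted_tangle_weak_tangle:
  assumes disj: "V0 G \<inter> V1 G = {}" and UV: "U \<subseteq> verts G" and "finite U"
    and inv: "attractor_inv G U ({v. pr G v = prio G U} \<inter> U) (prio G U mod 2) Z \<sigma>"
    and t: "t \<in> extract_tangles (subgame G U) (prio G U mod 2) Z \<sigma>"
  shows "weak_tangle G t"
proof -
  define a where "a = prio G U mod 2"
  let ?R = "closed_region (subgame G U) a Z \<sigma>"
  let ?H = "region_graph (subgame G U) a Z \<sigma>"
  from t obtain C where t_eq: "t = (C, \<sigma> |` C)" and C: "bottom_scc ?R ?H C"
    unfolding extract_tangles_def a_def by blast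
  from inv have ZU: "Z \<subseteq> U" and dom: "dom \<sigma> \<subseteq> Z \<inter> owned G a"
    and moves: "\<forall>x y. \<sigma> x = Some y \<longrightarrow> y \<in> Z \<and> (x, y) \<in> E G"
    unfolding attractor_inv_def a_def by auto
  from C have C_region: "C \<subseteq> ?R" and C_closed: "\<And>u w. u \<in> C \<Longrightarrow> (u, w) \<in> ?H \<Longrightarrow> w \<in> C"
    and connected: "\<forall>u\<in>C. \<forall>w\<in>C. (u, w) \<in> ?H\<^sup>*"
    unfolding bottom_scc_def by blast+
  have C_U: "C \<subseteq> U" using C_region ZU by (auto dest: closed_region_memD)
  obtain x where "x \<in> C" "pr G x = prio G U"
    using bottom_scc_meets_target[OF inv UV C[unfolded a_def]] by blast
  then have winner: "prio G C mod 2 = a"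
    using prio_eq_if_top_vertex[OF \<open>finite U\<close> C_U] unfolding a_def by metis
  have H_moves: "(x, y) \<in> tangle_moves G (C, \<sigma> |` C) \<and> y \<in> C" if "x \<in> C" "(x, y) \<in> ?H" for x y
    using strategy_move_if_region_graph[OF disj _ _ that(2)] dom moves C_closed that
    by (auto simp: tangle_moves_def strategy_move_def)
  have connected_C: "\<forall>u\<in>C. \<forall>w\<in>C. (u, w) \<in> (tangle_moves G (C, \<sigma> |` C))\<^sup>*"
    using connected rtrancl_within_closed_set[OF H_moves] by blast
  have "C \<inter> owned G a \<subseteq> dom \<sigma>"
  proof
    fix x assume "x \<in> C \<inter> owned G a"
    with C_region C_U closed_region_memD[of x "subgame G U" a Z \<sigma>]
    show "x \<in> dom \<sigma>" by auto
  qed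
  with dom have dom_C: "dom (\<sigma> |` C) = C \<inter> owned G a" by auto
  have moves_C: "y \<in> C \<and> (x, y) \<in> E G" if "(\<sigma> |` C) x = Some y" for x y
  proof -
    from that have "x \<in> C" and "\<sigma> x = Some y" by (auto simp: restrict_map_def split: if_splits)
    with moves ZU have "strategy_move G \<sigma> x y" "y \<in> U" "(x, y) \<in> E G"
      by (auto simp: strategy_move_def)
    with \<open>x \<in> C\<close> C_region C_U UV have "(x, y) \<in> ?H"
      by (meson region_graph_if_strategy_move ZU subsetD)
    then have "y \<in> C" by (rule C_closed[OF \<open>x \<in> C\<close>])
    then show ?thesis using \<open>(x, y) \<in> E G\<close> by (rule conjI)
  qed
  have "weak_tangle G (C, \<sigma> |` C)"
    unfolding weak_tangle_def fst_conv snd_conv winner using dom_C moves_C connected_C by blast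
  then show ?thesis by (simp add: t_eq)
qed

section \<open>Invariant of search\<close>

lemma no_dead_ends_verts: "parity_game G \<Longrightarrow> no_dead_ends G (verts G)"
  unfolding parity_game_def no_dead_ends_def by blast

lemma no_dead_ends_Diff_attractor:
  assumes "no_dead_ends G U" and "U \<subseteq> verts G"
    and final: "\<not> (\<exists>s'. tattr_step (subgame G U) T a A (Z, \<sigma>) s')"
  shows "no_dead_ends G (U - Z)"
  unfolding no_dead_ends_def
proof (rule ballI, rule ccontr)
  fix v assume v: "v \<in> U - Z" and "\<not> (\<exists>w\<in>U - Z. (v, w) \<in> E G)"
  then have succs_Z: "succs (subgame G U) v \<subseteq> Z" by auto
  obtain w where "w \<in> U" "(v, w) \<in> E G"
    using \<open>no_dead_ends G U\<close> v unfolding no_dead_ends_def by auto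
  with succs_Z v have w: "w \<in> succs (subgame G U) v \<inter> Z" by auto
  have v_vert: "v \<in> verts (subgame G U) - Z" using v assms(2) by auto
  consider "v \<in> owned G a" | "v \<in> owned G (1 - a)"
    using owned_cases[of v G a] v assms(2) by blast
  then show False
  proof cases
    case 1
    obtain \<sigma>' where "upd_A (subgame G U) a A (insert v Z) (\<sigma>(v \<mapsto> w)) \<sigma>'"
      using upd_A_exists by blast
    with v_vert 1 w have "tattr_step (subgame G U) T a A (Z, \<sigma>) (insert v Z, \<sigma>')"
      unfolding tattr_step_def Let_def prod.sel using v by (intro disjI1 exI[of _ v] exI[of _ w]) auto
    with final show False by blast
  next
    case 2
    obtain \<sigma>' where "upd_A (subgame G U) a A (insert v Z) \<sigma> \<sigma>'"
      using upd_A_exists by blast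
    with v_vert 2 succs_Z have "tattr_step (subgame G U) T a A (Z, \<sigma>) (insert v Z, \<sigma>')"
      unfolding tattr_step_def Let_def prod.sel using v by (intro disjI2 disjI1 exI[of _ v]) auto
    with final show False by blast
  qed
qed

definition search_inv :: "'v game \<Rightarrow> 'v sstate \<Rightarrow> bool" where
  "search_inv G s \<longleftrightarrow> (case s of (T, r, Y) \<Rightarrow>
     (\<forall>t\<in>T \<union> Y. weak_tangle G t) \<and> no_dead_ends G (verts G - dom r))"

lemma search_inv_step:
  assumes pg: "parity_game G" and inv: "search_inv G (T, r, Y)"
    and step: "search_step G (T, r, Y) s'"
  shows "search_inv G s'"
proof -
  define U where "U = verts G - dom r"
  from pg have disj: "V0 G \<inter> V1 G = {}" and "finite U"
    unfolding parity_game_def U_def by auto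
  from inv have tangles: "\<forall>t\<in>T \<union> Y. weak_tangle G t" and "no_dead_ends G U"
    unfolding search_inv_def U_def by auto
  have UV: "U \<subseteq> verts G" and verts_U: "verts G \<inter> U = U" unfolding U_def by auto
  from step consider
      (inner) Z \<sigma> where
        "tattr_result (subgame G U) {t\<in>T. fst t \<subseteq> U} (prio G U mod 2) ({v. pr G v = prio G U} \<inter> U) Z \<sigma>"
        "s' = (T, \<lambda>v. if v \<in> Z then Some (prio G U) else r v,
               Y \<union> extract_tangles (subgame G U) (prio G U mod 2) Z \<sigma>)"
    | (restart) "s' = (T \<union> Y, Map.empty, {})"
    unfolding search_step_def prod.case Let_def U_def[symmetric] verts_subgame verts_U prio_subgame
    by blast
  then show ?thesis
  proof cases
    case (inner Z \<sigma>)
    have "attractor_inv G U ({v. pr G v = prio G U} \<inter> U) (prio G U mod 2) Z \<sigma>"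
      using attractor_inv_result[OF disj \<open>no_dead_ends G U\<close> _ _ inner(1)] tangles by auto
    then have "\<forall>t\<in>extract_tangles (subgame G U) (prio G U mod 2) Z \<sigma>. weak_tangle G t"
      using extracted_tangle_weak_tangle[OF disj UV \<open>finite U\<close>] by blast
    moreover have "no_dead_ends G (U - Z)"
      using no_dead_ends_Diff_attractor[OF \<open>no_dead_ends G U\<close> UV] inner(1)
      unfolding tattr_result_def by blast
    moreover have "verts G - dom (\<lambda>v. if v \<in> Z then Some (prio G U) else r v) = U - Z"
      unfolding U_def by (auto simp: dom_def)
    ultimately show ?thesis
      using tangles unfolding search_inv_def inner(2) by auto
  next
    case restart
    with tangles no_dead_ends_verts[OF pg] show ?thesis
      unfolding search_inv_def by auto
  qed
qed

lemma search_inv_reachable: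
  assumes pg: "parity_game G" and T0: "\<forall>t\<in>T0. is_tangle G t"
    and "(search_step G)\<^sup>*\<^sup>* (T0, Map.empty, {}) s"
  shows "search_inv G s"
  using assms(3)
proof (induction rule: rtranclp_induct)
  case base
  from pg have "V0 G \<inter> V1 G = {}" unfolding parity_game_def by blast
  with T0 no_dead_ends_verts[OF pg] show ?case
    unfolding search_inv_def by (auto intro: is_tangle_weak_tangle)
next
  case (step s s')
  then show ?case
    using search_inv_step[OF pg] by (cases s) blast
qed

theorem lemma3:
  fixes G :: "'v game" and T0 T Y :: "'v tangle set" and r :: "'v \<rightharpoonup> nat"
    and Z :: "'v set" and \<sigma> :: "'v \<rightharpoonup> 'v"
  assumes "parity_game G"
    and "\<forall>t \<in> T0. is_tangle G t"
    and "(search_step G)\<^sup>*\<^sup>* (T0, Map.empty, {}) (T, r, Y)"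
    and "verts G - dom r \<noteq> {}"
    and "tattr_result (subgame G (verts G - dom r))
           {t \<in> T. fst t \<subseteq> verts G - dom r}
           (prio G (verts G - dom r) mod 2)
           ({v. pr G v = prio G (verts G - dom r)} \<inter> (verts G - dom r)) Z \<sigma>"
  shows "\<forall>v \<in> Z. \<exists>path. path \<noteq> [] \<and> hd path = v \<and>
           pr G (last path) = prio G (verts G - dom r) \<and> set path \<subseteq> Z \<and>
           (\<forall>i < length path - 1.
              (path ! i, path ! Suc i) \<in> E (subgame G (verts G - dom r)) \<and>
              (\<forall>w. \<sigma> (path ! i) = Some w \<longrightarrow> path ! Suc i = w))"
proof -
  let ?U = "verts G - dom r"
  let ?A = "{v. pr G v = prio G ?U} \<inter> ?U"
  have "V0 G \<inter> V1 G = {}" using assms(1) unfolding parity_game_def by blast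
  moreover have "search_inv G (T, r, Y)"
    using search_inv_reachable[OF assms(1-3)] .
  ultimately have "attractor_inv G ?U ?A (prio G ?U mod 2) Z \<sigma>"
    using attractor_inv_result[OF _ _ _ _ assms(5)] unfolding search_inv_def by auto
  then have ZU: "Z \<subseteq> ?U" and attr: "\<forall>v\<in>Z. attracted G ?A Z \<sigma> v"
    unfolding attractor_inv_def by auto
  have "\<exists>path. path \<noteq> [] \<and> hd path = v \<and> last path \<in> ?A \<and> set path \<subseteq> Z \<and>
      successively (strategy_move (subgame G ?U) \<sigma>) path" if v: "v \<in> Z" for v
  proof -
    obtain path where path: "path \<noteq> []" "hd path = v" "last path \<in> ?A" "set path \<subseteq> Z"
      and moves: "successively (strategy_move G \<sigma>) path"
      using attracted_path[OF attr[rule_format, OF v]] by blast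
    from moves have "successively (strategy_move (subgame G ?U) \<sigma>) path"
      by (rule successively_mono) (use path(4) ZU in auto)
    with path show ?thesis by blast
  qed
  then show ?thesis
    unfolding successively_conv_nth strategy_move_def by (fastforce simp: less_diff_conv)
qed

end
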